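(* Let $(G,\cdot)$ be a finite group and let $\psi\in\operatorname{End}(G,\cdot)$ be non-trivial and idempotent ($\psi\circ\psi=\psi$) with $\psi([[G,\psi],G])\le Z(G,\cdot)$. Let $N=\{h\mapsto g\,\psi(g)^{-1}h\,\psi(g) : g\in G\}\le\operatorname{Perm}(G)$. Then $N\cong(\ker\psi,\cdot)\times(\psi(G),\cdot)$.
   Context: $\operatorname{Perm}(G)$ is the group of permutations of the set $G$. For $\psi\in\operatorname{End}(G,\cdot)$, $[g,\psi]=g\cdot\psi(g)^{-1}$ and $[G,\psi]$ is the subgroup generated by these elements; $[x,y]=xyx^{-1}y^{-1}$ and $[A,B]$ is the subgroup generated by $[a,b]$, $a\in A,b\in B$; $Z(G,\cdot)$ is the centre. *)

theory Defs
  imports "HOL-Algebra.Algebra"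
begin

definition group_centre :: "('a, 'b) monoid_scheme \<Rightarrow> 'a set" where
  "group_centre G = {z \<in> carrier G. \<forall>x \<in> carrier G. z \<otimes>\<^bsub>G\<^esub> x = x \<otimes>\<^bsub>G\<^esub> z}"

definition endo_comm :: "('a, 'b) monoid_scheme \<Rightarrow> ('a \<Rightarrow> 'a) \<Rightarrow> 'a set" where
  "endo_comm G \<psi> = generate G ((\<lambda>g. g \<otimes>\<^bsub>G\<^esub> inv\<^bsub>G\<^esub> (\<psi> g)) ` carrier G)"

definition comm_subgroup :: "('a, 'b) monoid_scheme \<Rightarrow> 'a set \<Rightarrow> 'a set \<Rightarrow> 'a set" where
  "comm_subgroup G A B = generate G
     (\<Union>a \<in> A. \<Union>b \<in> B. {a \<otimes>\<^bsub>G\<^esub> b \<otimes>\<^bsub>G\<^esub> inv\<^bsub>G\<^esub> a \<otimes>\<^bsub>G\<^esub> inv\<^bsub>G\<^esub> b})"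

text \<open>The set N of permutations h \<mapsto> g psi(g)^-1 h psi(g) of carrier G,
  as elements of BijGroup (carrier G) (extensional functions).\<close>
definition N_perm :: "('a, 'b) monoid_scheme \<Rightarrow> ('a \<Rightarrow> 'a) \<Rightarrow> ('a \<Rightarrow> 'a) set" where
  "N_perm G \<psi> = (\<lambda>g. restrict (\<lambda>h. g \<otimes>\<^bsub>G\<^esub> inv\<^bsub>G\<^esub> (\<psi> g) \<otimes>\<^bsub>G\<^esub> h \<otimes>\<^bsub>G\<^esub> \<psi> g) (carrier G)) ` carrier G"

end

theory Submission
  imports Defs
begin

text \<open>Left multiplication by k commutes with right multiplication by x\<inverse>, so
  (k, x) \<mapsto> (h \<mapsto> k h x\<inverse>) is a homomorphism from H \<times> J into the permutations
  of G for any two subgroups H, J; evaluating at 1 shows that it is injective once H and J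
  meet trivially. For an idempotent endomorphism \<psi> the kernel meets the image trivially,
  and writing g = k x\<inverse> with k = g \<psi>(g)\<inverse> in the kernel and x = \<psi>(g)\<inverse> in the
  image identifies h \<mapsto> g \<psi>(g)\<inverse> h \<psi>(g) with the translation by (k, x). Hence N is
  the injective image of ker \<psi> \<times> \<psi>(G).\<close>

definition lr_translation :: "('a, 'b) monoid_scheme \<Rightarrow> 'a \<Rightarrow> 'a \<Rightarrow> 'a \<Rightarrow> 'a" where
  "lr_translation G k x = (\<lambda>h \<in> carrier G. k \<otimes>\<^bsub>G\<^esub> h \<otimes>\<^bsub>G\<^esub> inv\<^bsub>G\<^esub> x)"

lemma (in group) lr_translation_Bij:
  assumes "k \<in> carrier G" "x \<in> carrier G"
  shows "lr_translation G k x \<in> Bij (carrier G)"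
proof -
  have "bij_betw (\<lambda>h. k \<otimes> h \<otimes> inv x) (carrier G) (carrier G)"
    by (rule bij_betw_byWitness[where f' = "\<lambda>h. inv k \<otimes> h \<otimes> x"])
      (auto simp: assms m_assoc, simp_all add: assms m_assoc[symmetric])
  then have "bij_betw (lr_translation G k x) (carrier G) (carrier G)"
    by (rule bij_betw_cong[THEN iffD1, rotated]) (simp add: lr_translation_def)
  then show ?thesis
    by (simp add: Bij_def lr_translation_def)
qed

lemma (in group) lr_translation_compose:
  assumes "k \<in> carrier G" "x \<in> carrier G" "k' \<in> carrier G" "x' \<in> carrier G"
  shows "compose (carrier G) (lr_translation G k x) (lr_translation G k' x')
    = lr_translation G (k \<otimes> k') (x \<otimes> x')"
  by (rule ext) (simp add: compose_def lr_translation_def assms inv_mult_group m_assoc)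

lemma (in group) lr_translation_hom:
  assumes "subgroup H G" "subgroup J G"
  shows "(\<lambda>(k, x). lr_translation G k x)
    \<in> hom (G\<lparr>carrier := H\<rparr> \<times>\<times> G\<lparr>carrier := J\<rparr>) (BijGroup (carrier G))"
proof (rule homI)
  fix p assume "p \<in> carrier (G\<lparr>carrier := H\<rparr> \<times>\<times> G\<lparr>carrier := J\<rparr>)"
  then show "(case p of (k, x) \<Rightarrow> lr_translation G k x) \<in> carrier (BijGroup (carrier G))"
    using assms by (auto simp: BijGroup_def lr_translation_Bij subgroup.mem_carrier)
next
  fix p q assume "p \<in> carrier (G\<lparr>carrier := H\<rparr> \<times>\<times> G\<lparr>carrier := J\<rparr>)"
    and "q \<in> carrier (G\<lparr>carrier := H\<rparr> \<times>\<times> G\<lparr>carrier := J\<rparr>)"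
  then obtain k x k' x' where pq: "p = (k, x)" "q = (k', x')"
    and mem: "k \<in> carrier G" "x \<in> carrier G" "k' \<in> carrier G" "x' \<in> carrier G"
    using assms by (auto simp: subgroup.mem_carrier)
  then show "(case p \<otimes>\<^bsub>G\<lparr>carrier := H\<rparr> \<times>\<times> G\<lparr>carrier := J\<rparr>\<^esub> q of (k, x) \<Rightarrow> lr_translation G k x)
    = (case p of (k, x) \<Rightarrow> lr_translation G k x)
      \<otimes>\<^bsub>BijGroup (carrier G)\<^esub> (case q of (k, x) \<Rightarrow> lr_translation G k x)"
    by (simp add: BijGroup_def DirProd_def lr_translation_Bij lr_translation_compose)
qed

lemma (in group) lr_translation_inj_on:
  assumes "subgroup H G" "subgroup J G" "H \<inter> J \<subseteq> {\<one>}"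
  shows "inj_on (\<lambda>(k, x). lr_translation G k x) (H \<times> J)"
proof (rule inj_onI, clarify)
  fix k x k' x'
  assume kx: "k \<in> H" "x \<in> J" "k' \<in> H" "x' \<in> J"
    and eq: "lr_translation G k x = lr_translation G k' x'"
  then have mem: "k \<in> carrier G" "x \<in> carrier G" "k' \<in> carrier G" "x' \<in> carrier G"
    using assms(1,2) by (auto intro: subgroup.mem_carrier)
  have translate_one: "k \<otimes> inv x = k' \<otimes> inv x'"
    using fun_cong[OF eq, of \<one>] mem by (simp add: lr_translation_def)
  have "inv k' \<otimes> k = inv k' \<otimes> (k \<otimes> inv x) \<otimes> x"
    using mem by (simp add: m_assoc)
  also have "\<dots> = inv k' \<otimes> (k' \<otimes> inv x') \<otimes> x"
    by (simp add: translate_one)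
  also have "\<dots> = inv x' \<otimes> x"
    using mem by (simp add: m_assoc[symmetric])
  finally have quotients_eq: "inv k' \<otimes> k = inv x' \<otimes> x" .
  have "inv k' \<otimes> k \<in> H" "inv x' \<otimes> x \<in> J"
    using kx assms(1,2) by (auto intro: subgroup.m_closed subgroup.m_inv_closed)
  then have trivial: "inv k' \<otimes> k = \<one>" "inv x' \<otimes> x = \<one>"
    using quotients_eq assms(3) by auto
  have "k = k' \<otimes> (inv k' \<otimes> k)" "x = x' \<otimes> (inv x' \<otimes> x)"
    using mem by (simp_all add: m_assoc[symmetric])
  then show "k = k' \<and> x = x'"
    using mem by (simp add: trivial)
qed

lemma (in group_hom) inj_on_image_iso:
  assumes "inj_on h (carrier G)"
  shows "subgroup (h ` carrier G) H \<and> H\<lparr>carrier := h ` carrier G\<rparr> \<cong> G"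
proof
  show "subgroup (h ` carrier G) H" by (rule img_is_subgroup)
  have "h \<in> iso G (H\<lparr>carrier := h ` carrier G\<rparr>)"
    using assms by (auto simp: iso_def hom_def bij_betw_def hom_mult)
  then show "H\<lparr>carrier := h ` carrier G\<rparr> \<cong> G"
    by (intro G.iso_sym is_isoI)
qed

lemma (in group) lr_translation_image_iso:
  assumes "subgroup H G" "subgroup J G" "H \<inter> J \<subseteq> {\<one>}"
  defines "T \<equiv> (\<lambda>(k, x). lr_translation G k x) ` (H \<times> J)"
  shows "subgroup T (BijGroup (carrier G))
    \<and> BijGroup (carrier G)\<lparr>carrier := T\<rparr> \<cong> G\<lparr>carrier := H\<rparr> \<times>\<times> G\<lparr>carrier := J\<rparr>"
proof -
  interpret translation: group_hom "G\<lparr>carrier := H\<rparr> \<times>\<times> G\<lparr>carrier := J\<rparr>"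
    "BijGroup (carrier G)" "\<lambda>(k, x). lr_translation G k x"
    using assms(1,2)
    by (simp add: group_hom_def group_hom_axioms_def group_BijGroup lr_translation_hom
        DirProd_group subgroup.subgroup_is_group is_group)
  show ?thesis
    using translation.inj_on_image_iso lr_translation_inj_on[OF assms(1-3)]
    by (simp add: T_def)
qed

lemma kernel_Int_image_of_idempotent:
  assumes "\<forall>g \<in> carrier G. \<phi> (\<phi> g) = \<phi> g"
  shows "kernel G G \<phi> \<inter> \<phi> ` carrier G \<subseteq> {\<one>\<^bsub>G\<^esub>}"
proof clarify
  fix y assume "y \<in> carrier G" "\<phi> y \<in> kernel G G \<phi>"
  then show "\<phi> y = \<one>\<^bsub>G\<^esub>"
    using assms by (simp add: kernel_def)
qed

lemma (in group) N_perm_eq_lr_translation_image: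
  assumes "\<phi> \<in> hom G G" "\<forall>g \<in> carrier G. \<phi> (\<phi> g) = \<phi> g"
  shows "N_perm G \<phi> = (\<lambda>(k, x). lr_translation G k x) ` (kernel G G \<phi> \<times> \<phi> ` carrier G)"
proof -
  interpret \<phi>: group_hom G G \<phi>
    using assms(1) by (simp add: group_hom_def group_hom_axioms_def is_group)
  show ?thesis
  proof (intro equalityI subsetI)
    fix f assume "f \<in> N_perm G \<phi>"
    then obtain g where g: "g \<in> carrier G"
      and f: "f = (\<lambda>y \<in> carrier G. g \<otimes> inv (\<phi> g) \<otimes> y \<otimes> \<phi> g)"
      by (auto simp: N_perm_def)
    have "g \<otimes> inv (\<phi> g) \<in> kernel G G \<phi>"
      using g assms(2) by (simp add: kernel_def)
    moreover have "inv (\<phi> g) \<in> \<phi> ` carrier G"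
      using g by (metis inv_closed \<phi>.hom_inv image_eqI)
    moreover have "f = lr_translation G (g \<otimes> inv (\<phi> g)) (inv (\<phi> g))"
      using g by (simp add: f lr_translation_def)
    ultimately show "f \<in> (\<lambda>(k, x). lr_translation G k x) ` (kernel G G \<phi> \<times> \<phi> ` carrier G)"
      by auto
  next
    fix f assume "f \<in> (\<lambda>(k, x). lr_translation G k x) ` (kernel G G \<phi> \<times> \<phi> ` carrier G)"
    then obtain k y where k: "k \<in> carrier G" "\<phi> k = \<one>" and y: "y \<in> carrier G"
      and f: "f = lr_translation G k (\<phi> y)"
      by (auto simp: kernel_def)
    define g where "g = k \<otimes> inv (\<phi> y)"
    have g_mem: "g \<in> carrier G" using k y by (simp add: g_def)
    have \<phi>g: "\<phi> g = inv (\<phi> y)" using k y assms(2) by (simp add: g_def)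
    have "g \<otimes> inv (\<phi> g) = k"
      unfolding \<phi>g g_def using k y assms(2) by (simp add: m_assoc)
    then have "f = (\<lambda>x \<in> carrier G. g \<otimes> inv (\<phi> g) \<otimes> x \<otimes> \<phi> g)"
      using y by (simp add: f \<phi>g lr_translation_def)
    then show "f \<in> N_perm G \<phi>"
      using g_mem by (auto simp: N_perm_def)
  qed
qed

theorem mainTheorem10:
  fixes G :: "('a, 'b) monoid_scheme" and \<psi> :: "'a \<Rightarrow> 'a"
  assumes "group G"
    and "finite (carrier G)"
    and "\<psi> \<in> hom G G"
    and "\<exists>g \<in> carrier G. \<psi> g \<noteq> \<one>\<^bsub>G\<^esub>"
    and "\<forall>g \<in> carrier G. \<psi> (\<psi> g) = \<psi> g"
    and "\<psi> ` comm_subgroup G (endo_comm G \<psi>) (carrier G) \<subseteq> group_centre G"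
  shows "subgroup (N_perm G \<psi>) (BijGroup (carrier G))
    \<and> (BijGroup (carrier G)) \<lparr>carrier := N_perm G \<psi>\<rparr>
        \<cong> (G \<lparr>carrier := kernel G G \<psi>\<rparr>) \<times>\<times> (G \<lparr>carrier := \<psi> ` carrier G\<rparr>)"
proof -
  interpret \<psi>: group_hom G G \<psi>
    using assms(1,3) by (simp add: group_hom_def group_hom_axioms_def)
  show ?thesis
    using group.lr_translation_image_iso[OF assms(1) \<psi>.subgroup_kernel \<psi>.img_is_subgroup
        kernel_Int_image_of_idempotent[OF assms(5)]]
    by (simp add: group.N_perm_eq_lr_translation_image[OF assms(1,3,5)])
qed

end
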